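(* Let $W=\langle w_1,\ldots,w_n\rangle$ be a weave. (a) If $W$ is FF, then $W$ is transitive. (b) If $n$ is even and $W$ is FB, then $\{w_2,\ldots,w_n\}$ is a homogeneous set of $W$. (c) If $n$ is even and $W$ is BF, then $\{w_1,\ldots,w_{n-1}\}$ is a homogeneous set of $W$. (d) If $n$ is even and $W$ is BB, then $\{w_1,w_n\}$ is a homogeneous set of $W$. (e) If $n$ is odd and $W$ is FB, then $\{w_1,\ldots,w_{n-1}\}$ is a homogeneous set of $W$. (f) If $n$ is odd and $W$ is BF, then $W$ is isomorphic to $U_n$. (g) If $n$ is odd and $W$ is BB, then $W$ is isomorphic to $T_n$. Now let $v\notin V(W)$ be a vertex such that $v\to w_i$ for odd $i$ and $w_i\to v$ for even $i$, and let $W+v$ be the resulting tournament on $V(W)\cup\{v\}$. (h) If $n$ is odd and $W$ is FF or FB, then $\{v,w_1,\ldots,w_{n-1}\}$ is a homogeneous set of $W+v$. (i) If $n$ is odd and $W$ is BF or BB, then $\{v,w_n\}$ is a homogeneous set of $W+v$. (j) If $n$ is even and $W$ is FF, then $W+v$ is isomorphic to $W_{n+1}$. (k) If $n$ is even and $W$ is FB or BF, then $W+v$ is isomorphic to $U_{n+1}$. (l) If $n$ is even and $W$ is BB, then $W+v$ is isomorphic to $T_{n+1}$.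
   Context: A tournament is a finite, non-null, loopless directed graph in which for any two distinct vertices $u,v$ there is exactly one edge with both ends in $\{u,v\}$; write $u\to v$ for the edge from $u$ to $v$, and $X\Rightarrow Y$ if $x\to y$ for all $x\in X,y\in Y$. A tournament is transitive if its vertices can be ordered so that all edges go forward. A homogeneous set of $G$ is a set $X\subseteq V(G)$ such that each vertex outside $X$ either has edges to all of $X$ or edges from all of $X$. A weave $\langle w_1,\dots,w_n\rangle$ is a tournament on $w_1,\dots,w_n$ such that: (1) $w_i\to w_j$ whenever $i<j$ and $i,j$ have opposite parity; (2) either (2a) $w_i\to w_j$ for all $i<j$ both odd, or (2b) $w_j\to w_i$ for all $i<j$ both odd; (3) either (3a) $w_i\to w_j$ for all $i<j$ both even, or (3b) $w_j\to w_i$ for all $i<j$ both even. It is FF if (2a),(3a) hold; FB if (2a),(3b); BF if (2b),(3a); BB if (2b),(3b). For $n=2k+1$: $T_n$ is the tournament on $v_1,\dots,v_n$ with $v_i\to v_j$ iff $j\equiv i+1,\dots,i+k\pmod n$; $U_n$ is obtained from $T_n$ by reversing all edges with both ends in $\{v_1,\dots,v_k\}$; $W_n$ is the tournament on $x_1,\dots,x_n$ with $x_i\to x_j$ for $1\le i<j\le n-1$ and $\{x_2,x_4,\dots,x_{n-1}\}\Rightarrow x_n\Rightarrow\{x_1,x_3,\dots,x_{n-2}\}$. *)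

theory Defs
  imports Main
begin

text \<open>A tournament with vertex set V and edge relation E (E u v means u \<rightarrow> v).
  Only the restriction of E to V matters.\<close>
definition tournament :: "'a set \<Rightarrow> ('a \<Rightarrow> 'a \<Rightarrow> bool) \<Rightarrow> bool" where
  "tournament V E \<longleftrightarrow> finite V \<and> V \<noteq> {} \<and> (\<forall>u\<in>V. \<not> E u u) \<and>
     (\<forall>u\<in>V. \<forall>v\<in>V. u \<noteq> v \<longrightarrow> (E u v \<longleftrightarrow> \<not> E v u))"

definition transitive_tournament :: "'a set \<Rightarrow> ('a \<Rightarrow> 'a \<Rightarrow> bool) \<Rightarrow> bool" where
  "transitive_tournament V E \<longleftrightarrow> tournament V E \<and>
     (\<exists>f. bij_betw f {..<card V} V \<and>
          (\<forall>i j. i < j \<and> j < card V \<longrightarrow> E (f i) (f j)))"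

definition homogeneous_set :: "'a set \<Rightarrow> ('a \<Rightarrow> 'a \<Rightarrow> bool) \<Rightarrow> 'a set \<Rightarrow> bool" where
  "homogeneous_set V E X \<longleftrightarrow> X \<subseteq> V \<and>
     (\<forall>y\<in>V - X. (\<forall>x\<in>X. E y x) \<or> (\<forall>x\<in>X. E x y))"

definition tourn_iso :: "'a set \<Rightarrow> ('a \<Rightarrow> 'a \<Rightarrow> bool) \<Rightarrow> 'b set \<Rightarrow> ('b \<Rightarrow> 'b \<Rightarrow> bool) \<Rightarrow> bool" where
  "tourn_iso V E V' E' \<longleftrightarrow>
     (\<exists>f. bij_betw f V V' \<and> (\<forall>u\<in>V. \<forall>v\<in>V. E u v \<longleftrightarrow> E' (f u) (f v)))"

definition weave :: "'a set \<Rightarrow> ('a \<Rightarrow> 'a \<Rightarrow> bool) \<Rightarrow> (nat \<Rightarrow> 'a) \<Rightarrow> nat \<Rightarrow> bool" where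
  "weave V E w n \<longleftrightarrow> tournament V E \<and> inj_on w {1..n} \<and> w ` {1..n} = V \<and>
     (\<forall>i j. 1 \<le> i \<and> i < j \<and> j \<le> n \<and> odd (i + j) \<longrightarrow> E (w i) (w j)) \<and>
     ((\<forall>i j. 1 \<le> i \<and> i < j \<and> j \<le> n \<and> odd i \<and> odd j \<longrightarrow> E (w i) (w j)) \<or>
      (\<forall>i j. 1 \<le> i \<and> i < j \<and> j \<le> n \<and> odd i \<and> odd j \<longrightarrow> E (w j) (w i))) \<and>
     ((\<forall>i j. 1 \<le> i \<and> i < j \<and> j \<le> n \<and> even i \<and> even j \<longrightarrow> E (w i) (w j)) \<or>
      (\<forall>i j. 1 \<le> i \<and> i < j \<and> j \<le> n \<and> even i \<and> even j \<longrightarrow> E (w j) (w i)))"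

definition odd_fwd :: "('a \<Rightarrow> 'a \<Rightarrow> bool) \<Rightarrow> (nat \<Rightarrow> 'a) \<Rightarrow> nat \<Rightarrow> bool" where
  "odd_fwd E w n \<longleftrightarrow> (\<forall>i j. 1 \<le> i \<and> i < j \<and> j \<le> n \<and> odd i \<and> odd j \<longrightarrow> E (w i) (w j))"
definition odd_bwd :: "('a \<Rightarrow> 'a \<Rightarrow> bool) \<Rightarrow> (nat \<Rightarrow> 'a) \<Rightarrow> nat \<Rightarrow> bool" where
  "odd_bwd E w n \<longleftrightarrow> (\<forall>i j. 1 \<le> i \<and> i < j \<and> j \<le> n \<and> odd i \<and> odd j \<longrightarrow> E (w j) (w i))"
definition even_fwd :: "('a \<Rightarrow> 'a \<Rightarrow> bool) \<Rightarrow> (nat \<Rightarrow> 'a) \<Rightarrow> nat \<Rightarrow> bool" where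
  "even_fwd E w n \<longleftrightarrow> (\<forall>i j. 1 \<le> i \<and> i < j \<and> j \<le> n \<and> even i \<and> even j \<longrightarrow> E (w i) (w j))"
definition even_bwd :: "('a \<Rightarrow> 'a \<Rightarrow> bool) \<Rightarrow> (nat \<Rightarrow> 'a) \<Rightarrow> nat \<Rightarrow> bool" where
  "even_bwd E w n \<longleftrightarrow> (\<forall>i j. 1 \<le> i \<and> i < j \<and> j \<le> n \<and> even i \<and> even j \<longrightarrow> E (w j) (w i))"

definition weave_FF where "weave_FF V E w n \<longleftrightarrow> weave V E w n \<and> odd_fwd E w n \<and> even_fwd E w n"
definition weave_FB where "weave_FB V E w n \<longleftrightarrow> weave V E w n \<and> odd_fwd E w n \<and> even_bwd E w n"
definition weave_BF where "weave_BF V E w n \<longleftrightarrow> weave V E w n \<and> odd_bwd E w n \<and> even_fwd E w n"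
definition weave_BB where "weave_BB V E w n \<longleftrightarrow> weave V E w n \<and> odd_bwd E w n \<and> even_bwd E w n"

text \<open>T_n, U_n, W_n on vertex set {1..n} (vertex i stands for v_i resp. x_i), n = 2k+1.\<close>
definition T_edge :: "nat \<Rightarrow> nat \<Rightarrow> nat \<Rightarrow> bool" where
  "T_edge n i j \<longleftrightarrow> (let d = (int j - int i) mod int n in 1 \<le> d \<and> d \<le> int (n div 2))"

definition U_edge :: "nat \<Rightarrow> nat \<Rightarrow> nat \<Rightarrow> bool" where
  "U_edge n i j \<longleftrightarrow> (if 1 \<le> i \<and> i \<le> n div 2 \<and> 1 \<le> j \<and> j \<le> n div 2
                      then T_edge n j i else T_edge n i j)"

definition W_edge :: "nat \<Rightarrow> nat \<Rightarrow> nat \<Rightarrow> bool" where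
  "W_edge n i j \<longleftrightarrow> (1 \<le> i \<and> i < j \<and> j \<le> n - 1) \<or>
                     (j = n \<and> 1 \<le> i \<and> i < n \<and> even i) \<or>
                     (i = n \<and> 1 \<le> j \<and> j < n \<and> odd j)"

definition add_vertex :: "('a \<Rightarrow> 'a \<Rightarrow> bool) \<Rightarrow> (nat \<Rightarrow> 'a) \<Rightarrow> nat \<Rightarrow> 'a \<Rightarrow> 'a \<Rightarrow> 'a \<Rightarrow> bool" where
  "add_vertex E w n v x y \<longleftrightarrow>
     (if x = v \<and> y = v then False
      else if x = v then (\<exists>i\<in>{1..n}. odd i \<and> y = w i)
      else if y = v then (\<exists>i\<in>{1..n}. even i \<and> x = w i)
      else E x y)"

end

theory Submission
  imports Defs
begin

text \<open>The edge between \<open>w\<^sub>i\<close> and \<open>w\<^sub>j\<close> in a weave depends only on \<open>i\<close>, \<open>j\<close> and the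
  two direction flags, so every claim becomes a statement about an explicit relation on the
  indices \<open>{1..n}\<close>: homogeneity is checked on indices, and the isomorphisms with \<open>T\<^sub>n\<close> and
  \<open>U\<^sub>n\<close> are explicit relabellings of the indices. Adding \<open>v\<close> as index \<open>n + 1\<close> gives again
  an index relation; for even \<open>n\<close> it is a weave of length \<open>n + 1\<close> when the odd part runs
  backwards, and becomes one after moving \<open>v\<close> to the front in the FB case.\<close>

definition indexes ::
    "(nat \<Rightarrow> 'a) \<Rightarrow> nat set \<Rightarrow> (nat \<Rightarrow> nat \<Rightarrow> bool) \<Rightarrow> 'a set \<Rightarrow> ('a \<Rightarrow> 'a \<Rightarrow> bool) \<Rightarrow> bool"
where
  "indexes w A R V E \<longleftrightarrow> bij_betw w A V \<and> (\<forall>i\<in>A. \<forall>j\<in>A. E (w i) (w j) \<longleftrightarrow> R i j)"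

lemma indexes_tourn_iso:
  assumes "indexes w A R V E" and "bij_betw s A B"
    and "\<And>i j. i \<in> A \<Longrightarrow> j \<in> A \<Longrightarrow> R i j \<longleftrightarrow> R' (s i) (s j)"
  shows "tourn_iso V E B R'"
proof -
  let ?g = "the_inv_into A w"
  have w: "bij_betw w A V" and E: "\<And>i j. i \<in> A \<Longrightarrow> j \<in> A \<Longrightarrow> E (w i) (w j) \<longleftrightarrow> R i j"
    using assms(1) unfolding indexes_def by blast+
  have g: "bij_betw ?g V A" by (rule bij_betw_the_inv_into[OF w])
  have "\<And>x. x \<in> V \<Longrightarrow> w (?g x) = x"
    using w by (auto simp: bij_betw_def intro: f_the_inv_into_f)
  moreover have "?g u \<in> A" if "u \<in> V" for u
    using g that by (auto dest: bij_betwE)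
  ultimately have "\<forall>u\<in>V. \<forall>v\<in>V. E u v \<longleftrightarrow> R' ((s \<circ> ?g) u) ((s \<circ> ?g) v)"
    using E assms(3) by (metis comp_apply)
  with bij_betw_trans[OF g assms(2)] show ?thesis
    unfolding tourn_iso_def by blast
qed

lemma indexes_homogeneous_set:
  assumes "indexes w A R V E" and "S \<subseteq> A"
    and "\<And>k. k \<in> A - S \<Longrightarrow> (\<forall>j\<in>S. R k j) \<or> (\<forall>j\<in>S. R j k)"
  shows "homogeneous_set V E (w ` S)"
  unfolding homogeneous_set_def
proof (intro conjI ballI)
  have w: "bij_betw w A V" and E: "\<And>i j. i \<in> A \<Longrightarrow> j \<in> A \<Longrightarrow> E (w i) (w j) \<longleftrightarrow> R i j"
    using assms(1) unfolding indexes_def by blast+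
  show "w ` S \<subseteq> V"
    using w assms(2) by (auto simp: bij_betw_def)
  fix y assume "y \<in> V - w ` S"
  then obtain k where k: "k \<in> A - S" "y = w k"
    using w by (auto simp: bij_betw_def)
  show "(\<forall>x\<in>w ` S. E y x) \<or> (\<forall>x\<in>w ` S. E x y)"
    using assms(3)[OF k(1)] E k assms(2) by auto
qed

lemma tournament_indexesI:
  assumes "tournament V E" and "bij_betw w A V"
    and R_irrefl: "\<And>i. \<not> R i i"
    and R_asym: "\<And>i j. i \<noteq> j \<Longrightarrow> R j i \<longleftrightarrow> \<not> R i j"
    and fwd: "\<And>i j. i \<in> A \<Longrightarrow> j \<in> A \<Longrightarrow> i < j \<Longrightarrow> E (w i) (w j) \<longleftrightarrow> R i j"
  shows "indexes w A R V E"
  unfolding indexes_def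
proof (intro conjI ballI)
  fix i j assume i: "i \<in> A" and j: "j \<in> A"
  have wV: "w i \<in> V" "w j \<in> V" using i j assms(2) by (auto simp: bij_betw_def)
  consider "i < j" | "i = j" | "j < i" by arith
  then show "E (w i) (w j) \<longleftrightarrow> R i j"
  proof cases
    case 3
    then have "w i \<noteq> w j"
      using i j assms(2) by (auto simp: bij_betw_def dest: inj_onD)
    then have "E (w i) (w j) \<longleftrightarrow> \<not> E (w j) (w i)"
      using assms(1) wV unfolding tournament_def by blast
    then show ?thesis
      using fwd[OF j i 3] R_asym[of j i] 3 by simp
  next
    case 2
    then show ?thesis
      using assms(1) wV R_irrefl unfolding tournament_def by simp
  qed (use fwd i j in blast)
qed (rule assms(2))

text \<open>The flags \<open>ob\<close>, \<open>eb\<close> select (2b) and (3b) instead of (2a) and (3a).\<close>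
definition weave_rel :: "bool \<Rightarrow> bool \<Rightarrow> nat \<Rightarrow> nat \<Rightarrow> bool" where
  "weave_rel ob eb i j \<longleftrightarrow>
     i \<noteq> j \<and> (if odd i = odd j \<and> (if odd i then ob else eb) then j < i else i < j)"

lemma weave_rel_asym: "i \<noteq> j \<Longrightarrow> weave_rel ob eb j i \<longleftrightarrow> \<not> weave_rel ob eb i j"
  unfolding weave_rel_def by auto

lemma weave_indexes:
  assumes W: "weave V E w n"
    and ob: "if ob then odd_bwd E w n else odd_fwd E w n"
    and eb: "if eb then even_bwd E w n else even_fwd E w n"
  shows "indexes w {1..n} (weave_rel ob eb) V E"
proof (rule tournament_indexesI)
  have T: "tournament V E" and w: "bij_betw w {1..n} V"
    using W by (auto simp: weave_def bij_betw_def)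
  then show "tournament V E" "bij_betw w {1..n} V" by simp_all
  show "\<And>i. \<not> weave_rel ob eb i i"
    by (simp add: weave_rel_def)
  show "\<And>i j. i \<noteq> j \<Longrightarrow> weave_rel ob eb j i \<longleftrightarrow> \<not> weave_rel ob eb i j"
    by (rule weave_rel_asym)
  fix i j assume i: "i \<in> {1..n}" and j: "j \<in> {1..n}" and ij: "i < j"
  have "E (w j) (w i) \<longleftrightarrow> \<not> E (w i) (w j)"
    using T w i j ij unfolding tournament_def bij_betw_def
    by (metis imageI inj_onD less_irrefl)
  then show "E (w i) (w j) \<longleftrightarrow> weave_rel ob eb i j"
    using W ob eb i j ij
    by (cases ob; cases eb; cases "odd i"; cases "odd j")
       (auto simp: weave_def weave_rel_def odd_bwd_def odd_fwd_def even_bwd_def even_fwd_def)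
qed

lemma weave_FF_indexes: "weave_FF V E w n \<Longrightarrow> indexes w {1..n} (weave_rel False False) V E"
  unfolding weave_FF_def using weave_indexes[of V E w n False False] by simp

lemma weave_FB_indexes: "weave_FB V E w n \<Longrightarrow> indexes w {1..n} (weave_rel False True) V E"
  unfolding weave_FB_def using weave_indexes[of V E w n False True] by simp

lemma weave_BF_indexes: "weave_BF V E w n \<Longrightarrow> indexes w {1..n} (weave_rel True False) V E"
  unfolding weave_BF_def using weave_indexes[of V E w n True False] by simp

lemma weave_BB_indexes: "weave_BB V E w n \<Longrightarrow> indexes w {1..n} (weave_rel True True) V E"
  unfolding weave_BB_def using weave_indexes[of V E w n True True] by simp

lemma indexes_less_transitive_tournament:
  assumes "tournament V E" and "indexes w {1..n} (<) V E"
  shows "transitive_tournament V E"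
proof -
  have w: "bij_betw w {1..n} V" and E: "\<And>i j. i \<in> {1..n} \<Longrightarrow> j \<in> {1..n} \<Longrightarrow> E (w i) (w j) \<longleftrightarrow> i < j"
    using assms(2) unfolding indexes_def by blast+
  have "card V = n"
    using bij_betw_same_card[OF w] by simp
  moreover have "bij_betw Suc {..<n} {1..n}"
    by (simp add: bij_betw_def image_Suc_lessThan atLeastAtMost_iff)
  then have "bij_betw (w \<circ> Suc) {..<n} V"
    using w by (rule bij_betw_trans)
  ultimately show ?thesis
    using assms(1) E unfolding transitive_tournament_def
    by (intro conjI exI[of _ "w \<circ> Suc"]) auto
qed

lemma T_edge_iff:
  assumes "odd n" and "a \<in> {1..n}" and "b \<in> {1..n}"
  shows "T_edge n a b \<longleftrightarrow> (a < b \<and> b - a \<le> n div 2) \<or> (b < a \<and> n div 2 < a - b)"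
proof (cases "a \<le> b")
  case True
  then have "(int b - int a) mod int n = int b - int a"
    using assms by (intro mod_pos_pos_trivial) auto
  then show ?thesis
    using True assms unfolding T_edge_def Let_def by auto
next
  case False
  then have "(int b - int a) mod int n = int b - int a + int n"
    using assms by (subst mod_pos_pos_trivial[symmetric, of "int b - int a + int n" "int n"]) auto
  moreover obtain k where "n = 2 * k + 1"
    using assms(1) by (auto elim: oddE)
  ultimately show ?thesis
    using False assms unfolding T_edge_def Let_def by auto
qed

definition T_label :: "nat \<Rightarrow> nat \<Rightarrow> nat" where
  "T_label n i = (if odd i then n div 2 + 1 - i div 2 else n + 1 - i div 2)"

definition U_label :: "nat \<Rightarrow> nat \<Rightarrow> nat" where
  "U_label n i = (if odd i then n - i div 2 else n div 2 + 1 - i div 2)"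

lemma bij_betw_endo_finite: "finite A \<Longrightarrow> f ` A \<subseteq> A \<Longrightarrow> inj_on f A \<Longrightarrow> bij_betw f A A"
  by (simp add: bij_betw_def endo_inj_surj)

lemma nat_even_odd_cases:
  fixes i :: nat
  obtains a where "i = 2 * a" | a where "i = 2 * a + 1"
  by (metis oddE evenE)

lemma T_label_bij: "odd n \<Longrightarrow> bij_betw (T_label n) {1..n} {1..n}"
  by (rule bij_betw_endo_finite)
     (auto simp: T_label_def inj_on_def elim!: oddE evenE split: if_splits)

lemma U_label_bij: "odd n \<Longrightarrow> bij_betw (U_label n) {1..n} {1..n}"
  by (rule bij_betw_endo_finite)
     (auto simp: U_label_def inj_on_def elim!: oddE evenE split: if_splits)

lemma weave_rel_BB_iff_T_edge:
  assumes n: "odd n" and i: "i \<in> {1..n}" and j: "j \<in> {1..n}"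
  shows "weave_rel True True i j \<longleftrightarrow> T_edge n (T_label n i) (T_label n j)"
proof -
  have l: "T_label n i \<in> {1..n}" "T_label n j \<in> {1..n}"
    using T_label_bij[OF n] i j by (auto dest: bij_betwE)
  obtain k where "n = 2 * k + 1"
    using n by (auto elim: oddE)
  then show ?thesis
    using i j l unfolding T_edge_iff[OF n l] unfolding weave_rel_def T_label_def
    by (cases i rule: nat_even_odd_cases; cases j rule: nat_even_odd_cases) auto
qed

lemma weave_rel_BF_iff_U_edge:
  assumes n: "odd n" and i: "i \<in> {1..n}" and j: "j \<in> {1..n}"
  shows "weave_rel True False i j \<longleftrightarrow> U_edge n (U_label n i) (U_label n j)"
proof -
  have l: "U_label n i \<in> {1..n}" "U_label n j \<in> {1..n}"
    using U_label_bij[OF n] i j by (auto dest: bij_betwE)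
  obtain k where "n = 2 * k + 1"
    using n by (auto elim: oddE)
  then show ?thesis
    using i j l unfolding U_edge_def T_edge_iff[OF n l] T_edge_iff[OF n l(2,1)]
    unfolding weave_rel_def U_label_def
    by (cases i rule: nat_even_odd_cases; cases j rule: nat_even_odd_cases) auto
qed

text \<open>Index \<open>n + 1\<close> stands for the new vertex \<open>v\<close>.\<close>
definition add_index_rel :: "nat \<Rightarrow> (nat \<Rightarrow> nat \<Rightarrow> bool) \<Rightarrow> nat \<Rightarrow> nat \<Rightarrow> bool" where
  "add_index_rel n R i j \<longleftrightarrow>
     (if i = n + 1 then j \<noteq> n + 1 \<and> odd j else if j = n + 1 then even i else R i j)"

lemma add_vertex_indexes:
  assumes "indexes w {1..n} R V E" and v: "v \<notin> V"
  shows "indexes (w(n + 1 := v)) {1..n + 1} (add_index_rel n R) (insert v V) (add_vertex E w n v)"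
proof -
  have w: "bij_betw w {1..n} V" and E: "\<And>i j. i \<in> {1..n} \<Longrightarrow> j \<in> {1..n} \<Longrightarrow> E (w i) (w j) \<longleftrightarrow> R i j"
    using assms(1) unfolding indexes_def by blast+
  have split: "{1..n + 1} = insert (n + 1) {1..n}" by auto
  have w': "bij_betw (w(n + 1 := v)) {1..n} V"
    using w by (rule bij_betw_cong[THEN iffD1, rotated]) auto
  have "bij_betw (w(n + 1 := v)) (insert (n + 1) {1..n}) (insert v V)"
    using notIn_Un_bij_betw[of "n + 1" "{1..n}" "w(n + 1 := v)" V] w' v by simp
  moreover have "w k \<noteq> v" and "(\<exists>i\<in>{1..n}. P i \<and> w k = w i) \<longleftrightarrow> P k" if "k \<in> {1..n}" for k P
    using that w v by (auto simp: bij_betw_def dest: inj_onD)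
  ultimately show ?thesis
    unfolding indexes_def add_vertex_def add_index_rel_def split using E
    by (auto simp: eq_commute[of v])
qed

lemma add_index_rel_odd_bwd:
  assumes "even n" and "i \<in> {1..n + 1}" and "j \<in> {1..n + 1}"
  shows "add_index_rel n (weave_rel True eb) i j \<longleftrightarrow> weave_rel True eb i j"
  using assms by (auto simp: add_index_rel_def weave_rel_def)

lemma add_index_rel_FF:
  assumes "even n" and "i \<in> {1..n + 1}" and "j \<in> {1..n + 1}"
  shows "add_index_rel n (weave_rel False False) i j \<longleftrightarrow> W_edge (n + 1) i j"
  using assms by (auto simp: add_index_rel_def weave_rel_def W_edge_def)

text \<open>Listing \<open>v\<close> first turns \<open>W + v\<close>, for an FB weave \<open>W\<close> of even length, into a BF weave.\<close>
definition move_last_first :: "nat \<Rightarrow> nat \<Rightarrow> nat" where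
  "move_last_first n i = (if i = n + 1 then 1 else i + 1)"

lemma move_last_first_bij: "bij_betw (move_last_first n) {1..n + 1} {1..n + 1}"
  by (rule bij_betw_endo_finite) (auto simp: move_last_first_def inj_on_def split: if_splits)

lemma add_index_rel_FB:
  assumes "even n" and "i \<in> {1..n + 1}" and "j \<in> {1..n + 1}"
  shows "add_index_rel n (weave_rel False True) i j \<longleftrightarrow>
    weave_rel True False (move_last_first n i) (move_last_first n j)"
  using assms by (auto simp: add_index_rel_def weave_rel_def move_last_first_def)

lemma weave_FF_transitive: "weave_FF V E w n \<Longrightarrow> transitive_tournament V E"
proof (rule indexes_less_transitive_tournament)
  assume W: "weave_FF V E w n"
  then show "tournament V E"
    by (simp add: weave_FF_def weave_def)
  have "weave_rel False False = (<)"
    by (auto simp: weave_rel_def fun_eq_iff)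
  with weave_FF_indexes[OF W] show "indexes w {1..n} (<) V E"
    by simp
qed

lemma weave_FB_homogeneous_tail: "weave_FB V E w n \<Longrightarrow> homogeneous_set V E (w ` {2..n})"
  by (rule indexes_homogeneous_set[OF weave_FB_indexes]) (auto simp: weave_rel_def)

lemma weave_BF_even_homogeneous_init:
  assumes "even n" and "weave_BF V E w n"
  shows "homogeneous_set V E (w ` {1..n - 1})"
proof (rule indexes_homogeneous_set[OF weave_BF_indexes[OF assms(2)]])
  fix k assume "k \<in> {1..n} - {1..n - 1}"
  then have "k = n" by auto
  then show "(\<forall>j\<in>{1..n - 1}. weave_rel True False k j) \<or> (\<forall>j\<in>{1..n - 1}. weave_rel True False j k)"
    using assms(1) by (auto simp: weave_rel_def)
qed auto

lemma weave_FB_odd_homogeneous_init: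
  assumes "odd n" and "weave_FB V E w n"
  shows "homogeneous_set V E (w ` {1..n - 1})"
proof (rule indexes_homogeneous_set[OF weave_FB_indexes[OF assms(2)]])
  fix k assume "k \<in> {1..n} - {1..n - 1}"
  then have "k = n" by auto
  then show "(\<forall>j\<in>{1..n - 1}. weave_rel False True k j) \<or> (\<forall>j\<in>{1..n - 1}. weave_rel False True j k)"
    using assms(1) by (auto simp: weave_rel_def)
qed auto

lemma weave_BB_even_homogeneous_ends:
  assumes "even n" and "weave_BB V E w n"
  shows "homogeneous_set V E {w 1, w n}"
proof -
  have "V \<noteq> {}" and "V = w ` {1..n}"
    using assms(2) by (simp_all add: weave_BB_def weave_def tournament_def)
  then have "1 \<le> n" by auto
  have "homogeneous_set V E (w ` {1, n})"
  proof (rule indexes_homogeneous_set[OF weave_BB_indexes[OF assms(2)]])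
    show "{1, n} \<subseteq> {1..n}"
      using \<open>1 \<le> n\<close> by simp
    fix k assume "k \<in> {1..n} - {1, n}"
    then show "(\<forall>j\<in>{1, n}. weave_rel True True k j) \<or> (\<forall>j\<in>{1, n}. weave_rel True True j k)"
      using assms(1) by (cases "odd k") (auto simp: weave_rel_def)
  qed
  then show ?thesis by simp
qed

lemma weave_BF_odd_iso_U: "odd n \<Longrightarrow> weave_BF V E w n \<Longrightarrow> tourn_iso V E {1..n} (U_edge n)"
  by (rule indexes_tourn_iso[OF weave_BF_indexes U_label_bij])
     (simp_all add: weave_rel_BF_iff_U_edge)

lemma weave_BB_odd_iso_T: "odd n \<Longrightarrow> weave_BB V E w n \<Longrightarrow> tourn_iso V E {1..n} (T_edge n)"
  by (rule indexes_tourn_iso[OF weave_BB_indexes T_label_bij])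
     (simp_all add: weave_rel_BB_iff_T_edge)

lemma add_vertex_odd_homogeneous_init:
  assumes "odd n" and "weave_FF V E w n \<or> weave_FB V E w n" and v: "v \<notin> V"
  shows "homogeneous_set (insert v V) (add_vertex E w n v) (insert v (w ` {1..n - 1}))"
proof -
  obtain eb where "indexes w {1..n} (weave_rel False eb) V E"
    using assms(2) weave_FF_indexes weave_FB_indexes by blast
  from add_vertex_indexes[OF this v]
  have I: "indexes (w(n + 1 := v)) {1..n + 1} (add_index_rel n (weave_rel False eb))
      (insert v V) (add_vertex E w n v)" .
  let ?R = "add_index_rel n (weave_rel False eb)" and ?S = "insert (n + 1) {1..n - 1}"
  have "homogeneous_set (insert v V) (add_vertex E w n v) ((w(n + 1 := v)) ` ?S)"
  proof (rule indexes_homogeneous_set[OF I])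
    fix k assume "k \<in> {1..n + 1} - ?S"
    then have "k = n" by auto
    then show "(\<forall>j\<in>?S. ?R k j) \<or> (\<forall>j\<in>?S. ?R j k)"
      using assms(1) by (auto simp: add_index_rel_def weave_rel_def)
  qed auto
  moreover have "(w(n + 1 := v)) ` ?S = insert v (w ` {1..n - 1})"
    by auto
  ultimately show ?thesis by simp
qed

lemma add_vertex_odd_homogeneous_pair:
  assumes "odd n" and "weave_BF V E w n \<or> weave_BB V E w n" and v: "v \<notin> V"
  shows "homogeneous_set (insert v V) (add_vertex E w n v) {v, w n}"
proof -
  obtain eb where "indexes w {1..n} (weave_rel True eb) V E"
    using assms(2) weave_BF_indexes weave_BB_indexes by blast
  from add_vertex_indexes[OF this v]
  have I: "indexes (w(n + 1 := v)) {1..n + 1} (add_index_rel n (weave_rel True eb))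
      (insert v V) (add_vertex E w n v)" .
  let ?R = "add_index_rel n (weave_rel True eb)" and ?S = "{n + 1, n}"
  have "homogeneous_set (insert v V) (add_vertex E w n v) ((w(n + 1 := v)) ` ?S)"
  proof (rule indexes_homogeneous_set[OF I])
    show "?S \<subseteq> {1..n + 1}"
      using assms(1) by (auto elim: oddE)
    fix k assume "k \<in> {1..n + 1} - ?S"
    then show "(\<forall>j\<in>?S. ?R k j) \<or> (\<forall>j\<in>?S. ?R j k)"
      using assms(1) by (cases "odd k") (auto simp: add_index_rel_def weave_rel_def)
  qed
  then show ?thesis
    by (simp add: insert_commute)
qed

lemma add_vertex_even_FF_iso_W:
  assumes "even n" and "weave_FF V E w n" and "v \<notin> V"
  shows "tourn_iso (insert v V) (add_vertex E w n v) {1..n + 1} (W_edge (n + 1))"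
  by (rule indexes_tourn_iso[OF add_vertex_indexes[OF weave_FF_indexes[OF assms(2)] assms(3)]
        bij_betw_id])
     (simp add: add_index_rel_FF assms(1))

lemma add_vertex_even_iso_U:
  assumes "even n" and "weave_FB V E w n \<or> weave_BF V E w n" and v: "v \<notin> V"
  shows "tourn_iso (insert v V) (add_vertex E w n v) {1..n + 1} (U_edge (n + 1))"
  using assms(2)
proof
  assume "weave_FB V E w n"
  from add_vertex_indexes[OF weave_FB_indexes[OF this] v]
  show ?thesis
  proof (rule indexes_tourn_iso)
    show "bij_betw (U_label (n + 1) \<circ> move_last_first n) {1..n + 1} {1..n + 1}"
      using bij_betw_trans[OF move_last_first_bij U_label_bij] assms(1) by simp
    fix i j assume "i \<in> {1..n + 1}" "j \<in> {1..n + 1}"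
    moreover have "move_last_first n k \<in> {1..n + 1}" if "k \<in> {1..n + 1}" for k
      using that by (simp add: move_last_first_def)
    ultimately show "add_index_rel n (weave_rel False True) i j \<longleftrightarrow>
        U_edge (n + 1) ((U_label (n + 1) \<circ> move_last_first n) i)
          ((U_label (n + 1) \<circ> move_last_first n) j)"
      using assms(1) by (simp add: add_index_rel_FB weave_rel_BF_iff_U_edge)
  qed
next
  assume "weave_BF V E w n"
  from add_vertex_indexes[OF weave_BF_indexes[OF this] v]
  show ?thesis
  proof (rule indexes_tourn_iso)
    show "bij_betw (U_label (n + 1)) {1..n + 1} {1..n + 1}"
      using U_label_bij assms(1) by simp
    fix i j assume "i \<in> {1..n + 1}" "j \<in> {1..n + 1}"
    then show "add_index_rel n (weave_rel True False) i j \<longleftrightarrow>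
        U_edge (n + 1) (U_label (n + 1) i) (U_label (n + 1) j)"
      using assms(1) add_index_rel_odd_bwd weave_rel_BF_iff_U_edge[of "n + 1"] by simp
  qed
qed

lemma add_vertex_even_BB_iso_T:
  assumes "even n" and "weave_BB V E w n" and "v \<notin> V"
  shows "tourn_iso (insert v V) (add_vertex E w n v) {1..n + 1} (T_edge (n + 1))"
  by (rule indexes_tourn_iso[OF add_vertex_indexes[OF weave_BB_indexes[OF assms(2)] assms(3)]
        T_label_bij])
     (use assms(1) in \<open>simp_all add: add_index_rel_odd_bwd weave_rel_BB_iff_T_edge\<close>)

theorem proposition3p2:
  fixes V :: "'a set" and E :: "'a \<Rightarrow> 'a \<Rightarrow> bool" and w :: "nat \<Rightarrow> 'a" and n :: nat
  assumes W: "weave V E w n"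
  shows
    "(weave_FF V E w n \<longrightarrow> transitive_tournament V E) \<and>
     (even n \<and> weave_FB V E w n \<longrightarrow> homogeneous_set V E (w ` {2..n})) \<and>
     (even n \<and> weave_BF V E w n \<longrightarrow> homogeneous_set V E (w ` {1..n-1})) \<and>
     (even n \<and> weave_BB V E w n \<longrightarrow> homogeneous_set V E {w 1, w n}) \<and>
     (odd n \<and> weave_FB V E w n \<longrightarrow> homogeneous_set V E (w ` {1..n-1})) \<and>
     (odd n \<and> weave_BF V E w n \<longrightarrow> tourn_iso V E {1..n} (U_edge n)) \<and>
     (odd n \<and> weave_BB V E w n \<longrightarrow> tourn_iso V E {1..n} (T_edge n)) \<and>
     (\<forall>v. v \<notin> V \<longrightarrow>
        (odd n \<and> (weave_FF V E w n \<or> weave_FB V E w n) \<longrightarrow>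
           homogeneous_set (insert v V) (add_vertex E w n v) (insert v (w ` {1..n-1}))) \<and>
        (odd n \<and> (weave_BF V E w n \<or> weave_BB V E w n) \<longrightarrow>
           homogeneous_set (insert v V) (add_vertex E w n v) {v, w n}) \<and>
        (even n \<and> weave_FF V E w n \<longrightarrow>
           tourn_iso (insert v V) (add_vertex E w n v) {1..n+1} (W_edge (n+1))) \<and>
        (even n \<and> (weave_FB V E w n \<or> weave_BF V E w n) \<longrightarrow>
           tourn_iso (insert v V) (add_vertex E w n v) {1..n+1} (U_edge (n+1))) \<and>
        (even n \<and> weave_BB V E w n \<longrightarrow>
           tourn_iso (insert v V) (add_vertex E w n v) {1..n+1} (T_edge (n+1))))"
  by (intro conjI impI allI)
     (blast intro: weave_FF_transitive weave_FB_homogeneous_tail weave_BF_even_homogeneous_init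
        weave_BB_even_homogeneous_ends weave_FB_odd_homogeneous_init weave_BF_odd_iso_U
        weave_BB_odd_iso_T add_vertex_odd_homogeneous_init add_vertex_odd_homogeneous_pair
        add_vertex_even_FF_iso_W add_vertex_even_iso_U add_vertex_even_BB_iso_T)+

end
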